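(* For $K=2$ users and $Q\ge1$ layers, with $\Pr[M\ge q]>0$ and $\mathbb{E}[N_u]>0$, the region $\mathcal{C}^{\rm in}$ equals the set of $(R_1,R_2)\in\mathbb{R}_+^2$ for which there exist $R_{u,q}\ge0$ with $R_u=\sum_{q=1}^QR_{u,q}$ such that $$\max_{q}\frac{R_{1,q}+R_{2,q}}{\Pr[M\ge q]}\le1\quad\text{and}\quad \frac{1}{\mathbb{E}[N_u]}\sum_{q=1}^Q\Big(R_{u,q}+R_{\bar u,q}\frac{\Pr[N_u\ge q]}{\Pr[M\ge q]}\Big)\le1\ \text{ for }(u,\bar u)\in\{(1,2),(2,1)\};$$ that is, $\mathcal{C}^{\rm in}$ has the same form as $\mathcal{S}^{\rm in}$ with arrival rates replaced by message rates (and strict inequalities replaced by non-strict ones).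
   Context: Channel: two-user LPE-BC with $Q$ layers; the state $(N_1,N_2)\in\{0,\dots,Q\}^2$ has an arbitrary joint law, $M:=\max(N_1,N_2)$, $[x]^+=\max(0,x)$. For nonnegative reals $k_{u,q}$ define $t^{\rm unc}_q=\frac{k_{1,q}+k_{2,q}}{\Pr[M\ge q]}$, $t^{\rm unc}=\max_q t^{\rm unc}_q$, $k^{\rm rem}_{u,q}=k_{u,q}(1-\frac{\Pr[N_u\ge q]}{\Pr[M\ge q]})$, $k^{\rm rem}_u=\big[\sum_{q=1}^Q(k^{\rm rem}_{u,q}-(t^{\rm unc}-t^{\rm unc}_q)\Pr[N_u\ge q])\big]^+$, $t^{\rm NC}=\max_u k^{\rm rem}_u/\mathbb{E}[N_u]$, and $\mathcal{C}^{\rm in}=\bigcup_{t>0,k_{u,q}\ge0}\{(R_1,R_2): t^{\rm unc}+t^{\rm NC}\le t,\ R_u=\frac1t\sum_q k_{u,q}\}$. $\mathcal{S}^{\rm in}$ is the set of $(\lambda_1,\lambda_2)\in\mathbb{R}^2_+$ for which there exist $\lambda_{u,q}\ge0$ with $\lambda_u=\sum_q\lambda_{u,q}$, $\frac{\lambda_{1,q}+\lambda_{2,q}}{\Pr[M\ge q]}<1$ for all $q$, and $\sum_q(\lambda_{u,q}+\lambda_{\bar u,q}\frac{\Pr[N_u\ge q]}{\Pr[M\ge q]})<\mathbb{E}[N_u]$ for $(u,\bar u)\in\{(1,2),(2,1)\}$. *)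

theory Defs
  imports "HOL-Probability.Probability"
begin

text \<open>Channel state (N_1, N_2) with joint law P :: (nat \<times> nat) pmf, supported on
  {0..Q} \<times> {0..Q}. Users are indexed by u \<in> {1,2}, layers by q \<in> {1..Q}.\<close>

definition Nst :: "nat \<Rightarrow> nat \<times> nat \<Rightarrow> nat" where
  "Nst u s = (if u = 1 then fst s else snd s)"

definition PrM :: "(nat \<times> nat) pmf \<Rightarrow> nat \<Rightarrow> real" where
  "PrM P q = measure_pmf.prob P {s. max (fst s) (snd s) \<ge> q}"

definition PrN :: "(nat \<times> nat) pmf \<Rightarrow> nat \<Rightarrow> nat \<Rightarrow> real" where
  "PrN P u q = measure_pmf.prob P {s. Nst u s \<ge> q}"

definition EN :: "(nat \<times> nat) pmf \<Rightarrow> nat \<Rightarrow> real" where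
  "EN P u = measure_pmf.expectation P (\<lambda>s. real (Nst u s))"

definition t_unc_q :: "(nat \<times> nat) pmf \<Rightarrow> (nat \<Rightarrow> nat \<Rightarrow> real) \<Rightarrow> nat \<Rightarrow> real" where
  "t_unc_q P k q = (k 1 q + k 2 q) / PrM P q"

definition t_unc :: "(nat \<times> nat) pmf \<Rightarrow> nat \<Rightarrow> (nat \<Rightarrow> nat \<Rightarrow> real) \<Rightarrow> real" where
  "t_unc P Q k = Max ((\<lambda>q. t_unc_q P k q) ` {1..Q})"

definition k_rem_q :: "(nat \<times> nat) pmf \<Rightarrow> (nat \<Rightarrow> nat \<Rightarrow> real) \<Rightarrow> nat \<Rightarrow> nat \<Rightarrow> real" where
  "k_rem_q P k u q = k u q * (1 - PrN P u q / PrM P q)"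

definition k_rem :: "(nat \<times> nat) pmf \<Rightarrow> nat \<Rightarrow> (nat \<Rightarrow> nat \<Rightarrow> real) \<Rightarrow> nat \<Rightarrow> real" where
  "k_rem P Q k u = max 0 (\<Sum>q=1..Q. k_rem_q P k u q - (t_unc P Q k - t_unc_q P k q) * PrN P u q)"

definition t_NC :: "(nat \<times> nat) pmf \<Rightarrow> nat \<Rightarrow> (nat \<Rightarrow> nat \<Rightarrow> real) \<Rightarrow> real" where
  "t_NC P Q k = max (k_rem P Q k 1 / EN P 1) (k_rem P Q k 2 / EN P 2)"

definition C_in :: "(nat \<times> nat) pmf \<Rightarrow> nat \<Rightarrow> (real \<times> real) set" where
  "C_in P Q = (\<Union>t\<in>{t. t > 0}. \<Union>k\<in>{k. \<forall>u\<in>{1,2}. \<forall>q\<in>{1..Q}. k u q \<ge> 0}.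
      {(R1, R2). t_unc P Q k + t_NC P Q k \<le> t \<and>
                 R1 = (1 / t) * (\<Sum>q=1..Q. k 1 q) \<and> R2 = (1 / t) * (\<Sum>q=1..Q. k 2 q)})"

end

theory Submission imports Defs begin

text \<open>First, with the load
  L_u(k) = \<Sum>_q (k_u,q + k_ub,q Pr[N_u \<ge> q] / Pr[M \<ge> q]) of user u, the tail-sum formula
  E[N_u] = \<Sum>_q Pr[N_u \<ge> q] turns the sum inside k_rem_u into L_u(k) - t_unc E[N_u],
  so that t_unc + t_NC = max (t_unc, L_1(k) / E[N_1], L_2(k) / E[N_2]).
  Second, t_unc and L_u are homogeneous of degree one in k, so a schedule (t, k) is
  feasible iff the rates R = k / t satisfy the constraints with t = 1.\<close>

definition user_load :: "(nat \<times> nat) pmf \<Rightarrow> nat \<Rightarrow> (nat \<Rightarrow> nat \<Rightarrow> real) \<Rightarrow> nat \<Rightarrow> nat \<Rightarrow> real"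
  where "user_load P Q k u ub = (\<Sum>q=1..Q. k u q + k ub q * (PrN P u q / PrM P q))"

lemma EN_eq_sum_PrN:
  assumes "set_pmf P \<subseteq> {0..Q} \<times> {0..Q}"
  shows "EN P u = (\<Sum>q=1..Q. PrN P u q)"
proof -
  have "AE s in measure_pmf P. real (Nst u s) = (\<Sum>q=1..Q. indicator {s. q \<le> Nst u s} s)"
  proof (rule AE_pmfI)
    fix s assume "s \<in> set_pmf P"
    then have "{1..Q} \<inter> {q. q \<le> Nst u s} = {1..Nst u s}"
      using assms by (auto simp: Nst_def)
    then show "real (Nst u s) = (\<Sum>q=1..Q. indicator {s. q \<le> Nst u s} s)"
      by (simp add: indicator_def of_bool_def[symmetric])
  qed
  then have "EN P u = measure_pmf.expectation P (\<lambda>s. \<Sum>q=1..Q. indicator {s. q \<le> Nst u s} s)"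
    unfolding EN_def by (intro integral_cong_AE) auto
  also have "\<dots> = (\<Sum>q=1..Q. measure_pmf.expectation P (indicator {s. q \<le> Nst u s}))"
    by (rule Bochner_Integration.integral_sum) (simp add: measure_pmf.integrable_const_bound[where B=1])
  finally show ?thesis by (simp add: PrN_def)
qed

lemma sum_k_rem_eq_user_load:
  assumes "\<forall>q\<in>{1..Q}. PrM P q > 0" and "set_pmf P \<subseteq> {0..Q} \<times> {0..Q}"
    and "(u, ub) \<in> {(1, 2), (2, 1)}"
  shows "(\<Sum>q=1..Q. k_rem_q P k u q - (t_unc P Q k - t_unc_q P k q) * PrN P u q)
       = user_load P Q k u ub - t_unc P Q k * EN P u"
proof -
  have "k_rem_q P k u q - (t_unc P Q k - t_unc_q P k q) * PrN P u q
      = (k u q + k ub q * (PrN P u q / PrM P q)) - t_unc P Q k * PrN P u q"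
    if "q \<in> {1..Q}" for q
  proof -
    have "PrM P q > 0" using that assms(1) by blast
    then show ?thesis using assms(3) by (auto simp: k_rem_q_def t_unc_q_def field_simps)
  qed
  then have "(\<Sum>q=1..Q. k_rem_q P k u q - (t_unc P Q k - t_unc_q P k q) * PrN P u q)
      = (\<Sum>q=1..Q. (k u q + k ub q * (PrN P u q / PrM P q)) - t_unc P Q k * PrN P u q)"
    by (rule sum.cong[OF refl])
  then show ?thesis
    by (simp add: sum_subtractf sum_distrib_left user_load_def EN_eq_sum_PrN[OF assms(2)])
qed

lemma t_unc_plus_t_NC:
  assumes "\<forall>q\<in>{1..Q}. PrM P q > 0" and "set_pmf P \<subseteq> {0..Q} \<times> {0..Q}"
    and "EN P 1 > 0" and "EN P 2 > 0"
  shows "t_unc P Q k + t_NC P Q k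
       = max (t_unc P Q k) (max (user_load P Q k 1 2 / EN P 1) (user_load P Q k 2 1 / EN P 2))"
proof -
  have "k_rem P Q k u / EN P u = max 0 (user_load P Q k u ub / EN P u - t_unc P Q k)"
    if "(u, ub) \<in> {(1, 2), (2, 1)}" for u ub
  proof -
    have "EN P u > 0" using that assms(3,4) by auto
    then show ?thesis
      unfolding k_rem_def sum_k_rem_eq_user_load[OF assms(1,2) that]
      by (simp add: max_divide_distrib_right diff_divide_distrib)
  qed
  then show ?thesis
    unfolding t_NC_def by (auto simp: max_def)
qed

lemma t_unc_scale:
  assumes "Q \<ge> 1" and "t > 0"
  shows "t_unc P Q (\<lambda>u q. k u q / t) = t_unc P Q k / t"
proof -
  have "t_unc P Q k / t = Max ((\<lambda>x. x / t) ` t_unc_q P k ` {1..Q})"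
    unfolding t_unc_def using assms
    by (intro hom_Max_commute) (auto simp: max_divide_distrib_right)
  also have "\<dots> = t_unc P Q (\<lambda>u q. k u q / t)"
    unfolding t_unc_def t_unc_q_def image_image by (simp add: add_divide_distrib mult.commute)
  finally show ?thesis ..
qed

lemma user_load_scale: "user_load P Q (\<lambda>u q. k u q / t) u ub = user_load P Q k u ub / t"
  unfolding user_load_def sum_divide_distrib by (simp add: add_divide_distrib mult.commute)

theorem lemma3:
  fixes P :: "(nat \<times> nat) pmf" and Q :: nat
  assumes "Q \<ge> 1"
    and "set_pmf P \<subseteq> {0..Q} \<times> {0..Q}"
    and "\<forall>q\<in>{1..Q}. PrM P q > 0"
    and "\<forall>u\<in>{1,2}. EN P u > 0"
  shows "C_in P Q =
    {(R1, R2). R1 \<ge> 0 \<and> R2 \<ge> 0 \<and>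
      (\<exists>R :: nat \<Rightarrow> nat \<Rightarrow> real.
         (\<forall>u\<in>{1,2}. \<forall>q\<in>{1..Q}. R u q \<ge> 0) \<and>
         R1 = (\<Sum>q=1..Q. R 1 q) \<and> R2 = (\<Sum>q=1..Q. R 2 q) \<and>
         Max ((\<lambda>q. (R 1 q + R 2 q) / PrM P q) ` {1..Q}) \<le> 1 \<and>
         (\<forall>(u, ub)\<in>{(1::nat, 2::nat), (2, 1)}.
            (1 / EN P u) * (\<Sum>q=1..Q. R u q + R ub q * (PrN P u q / PrM P q)) \<le> 1))}"
  (is "_ = ?rates")
proof -
  have E: "EN P 1 > 0" "EN P 2 > 0" using assms(4) by auto
  define feasible where "feasible k t \<longleftrightarrow> t_unc P Q k \<le> t \<and>
      user_load P Q k 1 2 \<le> t * EN P 1 \<and> user_load P Q k 2 1 \<le> t * EN P 2"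
    for k :: "nat \<Rightarrow> nat \<Rightarrow> real" and t
  define nonneg where "nonneg k \<longleftrightarrow> (\<forall>u\<in>{1,2::nat}. \<forall>q\<in>{1..Q}. k u q \<ge> (0::real))" for k
  have schedule_feasible: "t_unc P Q k + t_NC P Q k \<le> t \<longleftrightarrow> feasible k t" for k t
    unfolding t_unc_plus_t_NC[OF assms(3,2) E] feasible_def using E by (simp add: divide_le_eq)
  have rates_iff: "x \<in> ?rates \<longleftrightarrow> (\<exists>R. nonneg R \<and> feasible R 1 \<and>
      x = (\<Sum>q=1..Q. R 1 q, \<Sum>q=1..Q. R 2 q))" for x
    unfolding feasible_def nonneg_def t_unc_def t_unc_q_def user_load_def
    using E by (auto simp: field_simps intro!: sum_nonneg)
  show ?thesis
  proof (intro set_eqI iffI)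
    fix x assume "x \<in> C_in P Q"
    then obtain t k where "t > 0" "nonneg k" "feasible k t"
      and x: "x = ((1 / t) * (\<Sum>q=1..Q. k 1 q), (1 / t) * (\<Sum>q=1..Q. k 2 q))"
      unfolding C_in_def nonneg_def schedule_feasible by blast
    define R where "R = (\<lambda>u q. k u q / t)"
    have "nonneg R" using \<open>nonneg k\<close> \<open>t > 0\<close> by (simp add: nonneg_def R_def)
    moreover have "feasible R 1"
      using \<open>feasible k t\<close> \<open>t > 0\<close>
      by (simp add: feasible_def R_def t_unc_scale[OF assms(1)] user_load_scale divide_le_eq mult.commute)
    moreover have "x = (\<Sum>q=1..Q. R 1 q, \<Sum>q=1..Q. R 2 q)"
      by (simp add: x R_def sum_divide_distrib)
    ultimately show "x \<in> ?rates" unfolding rates_iff by blast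
  next
    fix x assume "x \<in> ?rates"
    then obtain R where "nonneg R" "feasible R 1" "x = (\<Sum>q=1..Q. R 1 q, \<Sum>q=1..Q. R 2 q)"
      unfolding rates_iff by blast
    then show "x \<in> C_in P Q"
      unfolding C_in_def nonneg_def schedule_feasible by (intro UN_I[of 1] UN_I[of R]) auto
  qed
qed

end
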